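(* Let $k,m\in\mathbb{N}$ with $m<k\le 2m$ and $\gcd(2k+1,2(2m+1))=1$, and let $a>0$ satisfy $\frac{1}{4km+3k+m+1}\le\frac{a}{2k+1}\le\frac{1}{4km+k+3m+1}$. For $s=0,\dots,4m+1$ and $n=0,\dots,2k$ define $X_{sn}=\frac{s}{2(2m+1)}-\frac{n}{2k+1}$, $\Phi_{sn}=\sum_{l\in\mathbb{Z}}Q_2\big(2a(2m+1)(l+X_{sn})\big)$ with $Q_2(x)=(1-|x|)\chi_{[-1,1]}(x)$, and $A_{sn}=\Phi_{sn}-\Phi_{s,2k+1-n}$ for $n=1,\dots,k$. Then $A_{s,n}=-A_{4m+2-s,n}$ for all $s=1,\dots,2m$ and $n=1,\dots,k$. *)

theory Defs
  imports "HOL-Analysis.Analysis"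
begin

definition Q2 :: "real \<Rightarrow> real" where
  "Q2 x = (if \<bar>x\<bar> \<le> 1 then 1 - \<bar>x\<bar> else 0)"

definition Xsn :: "nat \<Rightarrow> nat \<Rightarrow> nat \<Rightarrow> nat \<Rightarrow> real" where
  "Xsn k m s n = real s / (2 * (2 * real m + 1)) - real n / (2 * real k + 1)"

definition Phi :: "real \<Rightarrow> nat \<Rightarrow> nat \<Rightarrow> nat \<Rightarrow> nat \<Rightarrow> real" where
  "Phi a k m s n = (\<Sum>\<^sub>\<infinity>l::int. Q2 (2 * a * (2 * real m + 1) * (real_of_int l + Xsn k m s n)))"

definition Asn :: "real \<Rightarrow> nat \<Rightarrow> nat \<Rightarrow> nat \<Rightarrow> nat \<Rightarrow> real" where
  "Asn a k m s n = Phi a k m s n - Phi a k m s (2 * k + 1 - n)"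

end

theory Submission
  imports Defs
begin

text \<open>\<open>\<Phi>\<^sub>s\<^sub>n\<close> is the periodisation of the even function \<open>Q\<^sub>2\<close>, sampled at \<open>X\<^sub>s\<^sub>n\<close>, so it is an
  even function of \<open>X\<^sub>s\<^sub>n\<close>. The reflections \<open>s \<mapsto> 4m+2-s\<close> and \<open>n \<mapsto> 2k+1-n\<close> together negate
  \<open>X\<^sub>s\<^sub>n\<close>, hence they exchange the two terms of \<open>A\<^sub>s\<^sub>n\<close> up to this symmetry.\<close>

lemma infsum_int_periodization_even:
  fixes f :: "real \<Rightarrow> 'b::{topological_ab_group_add, t2_space}"
  assumes even: "\<And>y. f (- y) = f y"
  shows "(\<Sum>\<^sub>\<infinity>l::int. f (c * (of_int l - x))) = (\<Sum>\<^sub>\<infinity>l::int. f (c * (of_int l + x)))"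
proof -
  have "(\<Sum>\<^sub>\<infinity>l::int. f (c * (of_int l + x))) = (\<Sum>\<^sub>\<infinity>l::int. f (c * (of_int (- l) + x)))"
    by (rule infsum_reindex_bij_betw[symmetric]) (simp add: bij_betw_def inj_def surj_def)
  also have "\<dots> = (\<Sum>\<^sub>\<infinity>l::int. f (c * (of_int l - x)))"
    using even[of "c * (of_int _ - x)"] by (simp add: algebra_simps)
  finally show ?thesis ..
qed

lemma Q2_minus [simp]: "Q2 (- x) = Q2 x"
  by (simp add: Q2_def)

lemma Phi_eq_if_Xsn_opposite:
  assumes "Xsn k m s' n' = - Xsn k m s n"
  shows "Phi a k m s' n' = Phi a k m s n"
  using infsum_int_periodization_even[of Q2 "2 * a * (2 * real m + 1)" "Xsn k m s n"]
  by (simp add: Phi_def assms)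

lemma Xsn_reflect:
  assumes "s \<le> 4 * m + 2" and "n \<le> 2 * k + 1"
  shows "Xsn k m s (2 * k + 1 - n) = - Xsn k m (4 * m + 2 - s) n"
  using assms by (simp add: Xsn_def of_nat_diff field_simps minus_divide_left)

lemma Asn_reflect:
  assumes "s \<le> 4 * m + 2" and "n \<le> 2 * k + 1"
  shows "Asn a k m s n = - Asn a k m (4 * m + 2 - s) n"
proof -
  have "Phi a k m s (2 * k + 1 - n) = Phi a k m (4 * m + 2 - s) n"
    using Xsn_reflect[OF assms] by (rule Phi_eq_if_Xsn_opposite)
  moreover have "Phi a k m (4 * m + 2 - s) (2 * k + 1 - n) = Phi a k m s n"
    using Xsn_reflect[of "4 * m + 2 - s" m n k] assms
    by (intro Phi_eq_if_Xsn_opposite) (simp add: diff_diff_cancel)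
  ultimately show ?thesis
    by (simp add: Asn_def)
qed

theorem lemma3p3:
  fixes k m :: nat and a :: real
  assumes "m < k" and "k \<le> 2 * m"
    and "gcd (2 * k + 1) (2 * (2 * m + 1)) = 1"
    and "a > 0"
    and "1 / real (4 * k * m + 3 * k + m + 1) \<le> a / real (2 * k + 1)"
    and "a / real (2 * k + 1) \<le> 1 / real (4 * k * m + k + 3 * m + 1)"
  shows "\<forall>s \<in> {1..2 * m}. \<forall>n \<in> {1..k}. Asn a k m s n = - Asn a k m (4 * m + 2 - s) n"
  by (intro ballI Asn_reflect) auto

end
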